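(* Let $b,c\in\mathbb{Z}$ and $d=b^2-4c$. For every positive integer $n$, $$nT_n(b,c)T_{n-1}(b,c)=b\sum_{j=0}^{n-1}(n-j)\binom{n+j}{2j}\binom{2j}{j}^2c^jd^{n-1-j}.$$
   Context: $T_n(b,c)$ is the coefficient of $x^n$ in $(x^2+bx+c)^n$, i.e. $T_n(b,c)=\sum_{k=0}^{\lfloor n/2\rfloor}\binom{n}{2k}\binom{2k}{k}b^{n-2k}c^k$. *)

theory Defs
  imports Main
begin

text \<open>Central trinomial coefficient T_n(b,c): coefficient of x^n in (x^2+bx+c)^n,
  given explicitly by the sum below.\<close>
definition T :: "nat \<Rightarrow> int \<Rightarrow> int \<Rightarrow> int" where
  "T n b c = (\<Sum>k\<le>n div 2. int (n choose (2*k)) * int ((2*k) choose k) * b^(n - 2*k) * c^k)"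

end

theory Submission
  imports Defs
begin

text \<open>Write d = b^2 - 4c. The T(n) = T_n(b,c) satisfy the three-term recurrence
  (n+2) T(n+2) = (2n+3) b T(n+1) - (n+1) d T(n). Together with the claim one proves the
  companion identity T(n)^2 = \<Sum>_j C(n+j,2j) C(2j,j)^2 c^j d^(n-j), by a simultaneous
  induction: multiplying the recurrence by T(n+1), or squaring it, expresses the next product
  and the next square through the previous ones, and the coefficients of the two sums obey
  matching recurrences. Written with falling factorials, these coefficient recurrences
  become polynomial identities.\<close>

definition falling_fact :: "'a::comm_ring_1 \<Rightarrow> nat \<Rightarrow> 'a" where
  "falling_fact y r = (\<Prod>i<r. y - of_nat i)"

lemma falling_fact_0 [simp]: "falling_fact y 0 = 1"
  by (simp add: falling_fact_def)

lemma falling_fact_Suc: "falling_fact y (Suc r) = falling_fact y r * (y - of_nat r)"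
  by (simp add: falling_fact_def)

lemma falling_fact_plus_1_Suc: "falling_fact (y + 1) (Suc r) = (y + 1) * falling_fact y r"
  unfolding falling_fact_def prod.lessThan_Suc_shift by (simp add: algebra_simps)

lemma falling_fact_Suc_Suc:
  "falling_fact y (Suc (Suc r)) = falling_fact y r * (y - of_nat r) * (y - of_nat r - 1)"
  by (simp add: falling_fact_Suc algebra_simps)

lemma falling_fact_plus_1_Suc_Suc:
  "falling_fact (y + 1) (Suc (Suc r)) = (y + 1) * falling_fact y r * (y - of_nat r)"
  unfolding falling_fact_plus_1_Suc[of y "Suc r"] falling_fact_Suc[of y r] by (simp only: mult.assoc)

lemma falling_fact_plus_2_Suc_Suc:
  "falling_fact (y + 2) (Suc (Suc r)) = (y + 2) * (y + 1) * falling_fact y r"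
  using falling_fact_plus_1_Suc[of "y + 1" "Suc r"] falling_fact_plus_1_Suc[of y r]
  by (simp add: add.assoc)

lemma of_nat_fact_mult_choose:
  "of_nat (fact k * (n choose k)) = falling_fact (of_nat n :: 'a::comm_ring_1) k"
proof (induction k)
  case 0
  then show ?case by simp
next
  case (Suc k)
  have "Suc k * (n choose Suc k) = (n - k) * (n choose k)"
    using binomial_absorption[of k n] binomial_absorb_comp[of n k] by simp
  then have "fact (Suc k) * (n choose Suc k) = fact k * (n choose k) * (n - k)"
    by (simp only: fact_Suc of_nat_id ac_simps)
  then have "of_nat (fact (Suc k) * (n choose Suc k)) = falling_fact (of_nat n :: 'a) k * of_nat (n - k)"
    unfolding Suc.IH[symmetric] by (metis of_nat_mult)
  also have "\<dots> = falling_fact (of_nat n) k * (of_nat n - of_nat k)"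
    by (cases "k \<le> n") (simp_all add: of_nat_diff binomial_eq_0 flip: Suc.IH)
  finally show ?case by (simp only: falling_fact_Suc)
qed

text \<open>The next two identities are the coefficient recurrences below at index i + 1, multiplied
  by (i+1)!^2 and by (i+1)!^4 / (2i)! respectively (with x = m and x = m + 1).\<close>

lemma falling_fact_trinomial_recurrence:
  fixes x :: "'a::comm_ring_1"
  shows "(x + 2) * falling_fact (x + 2) (2*i + 2)
    = (2*x + 3) * falling_fact (x + 1) (2*i + 2) - (x + 1) * falling_fact x (2*i + 2)
      + 4 * (x + 1) * (of_nat i + 1)^2 * falling_fact x (2*i)"
proof -
  have two: "2*i + 2 = Suc (Suc (2*i))" by simp
  show ?thesis
    unfolding two falling_fact_plus_2_Suc_Suc \<comment> \<open>the more special rules must fire first\<close>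
    unfolding falling_fact_plus_1_Suc_Suc
    unfolding falling_fact_Suc_Suc
    by (simp add: algebra_simps power2_eq_square)
qed

lemma falling_fact_square_recurrence:
  fixes x :: "'a::comm_ring_1" and i :: nat
  defines "y \<equiv> x + of_nat i"
  defines "k \<equiv> (2 * of_nat i + 1) * (2 * of_nat i + 2)"
  defines "p \<equiv> (of_nat i + 1)^4"
  shows "(x + 1)^2 * k * falling_fact (y + 2) (2*i + 2)
    = (2*x + 1)^2 * (k * falling_fact (y + 1) (2*i + 2) + 4 * p * falling_fact y (2*i))
      - 2 * (2*x + 1) * ((x - 1 - of_nat i) * k * falling_fact (y + 1) (2*i + 2)
                         + 4 * (x - of_nat i) * p * falling_fact y (2*i))
      + x^2 * k * falling_fact y (2*i + 2)"
proof -
  have two: "2*i + 2 = Suc (Suc (2*i))" by simp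
  show ?thesis
    unfolding two falling_fact_plus_2_Suc_Suc
    unfolding falling_fact_plus_1_Suc_Suc
    unfolding falling_fact_Suc_Suc
    unfolding y_def k_def p_def by (simp add: algebra_simps power2_eq_square power4_eq_xxxx)
qed

definition shift :: "(nat \<Rightarrow> 'a::zero) \<Rightarrow> nat \<Rightarrow> 'a" where
  "shift f j = (if j = 0 then 0 else f (j - 1))"

definition trinomial_coeff :: "nat \<Rightarrow> nat \<Rightarrow> int" where
  "trinomial_coeff n k = int (n choose (2*k)) * int ((2*k) choose k)"

definition square_coeff :: "nat \<Rightarrow> nat \<Rightarrow> int" where
  "square_coeff n j = int ((n + j) choose (2*j)) * int ((2*j) choose j)^2"

definition product_coeff :: "nat \<Rightarrow> nat \<Rightarrow> int" where
  "product_coeff n j = int (n - j) * square_coeff n j"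

lemma trinomial_coeff_eq_0: "n < 2*k \<Longrightarrow> trinomial_coeff n k = 0"
  by (simp add: trinomial_coeff_def)

lemma square_coeff_eq_0: "n < j \<Longrightarrow> square_coeff n j = 0"
  by (simp add: square_coeff_def)

lemma product_coeff_eq: "product_coeff n j = (int n - int j) * square_coeff n j"
  by (cases "j \<le> n") (simp_all add: product_coeff_def of_nat_diff square_coeff_eq_0)

lemma fact_mult_central_binomial:
  "fact k * fact k * of_nat ((2*k) choose k) = (fact (2*k) :: 'a::semiring_char_0)"
proof -
  have "fact k * fact (2*k - k) * ((2*k) choose k) = (fact (2*k) :: nat)"
    by (rule binomial_fact_lemma) simp
  then show ?thesis
    by (metis mult_2 diff_add_inverse2 of_nat_fact of_nat_mult)
qed

lemma trinomial_coeff_falling_fact: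
  "trinomial_coeff n k * fact k ^ 2 = falling_fact (int n) (2*k)"
proof -
  have "trinomial_coeff n k * fact k ^ 2 = int (n choose (2*k)) * (fact k * fact k * int ((2*k) choose k))"
    by (simp add: trinomial_coeff_def power2_eq_square ac_simps)
  also have "\<dots> = int (fact (2*k) * (n choose (2*k)))"
    by (simp add: fact_mult_central_binomial)
  finally show ?thesis by (simp only: of_nat_fact_mult_choose)
qed

lemma square_coeff_falling_fact:
  "square_coeff n j * fact j ^ 4 = falling_fact (int (n + j)) (2*j) * fact (2*j)"
proof -
  have "square_coeff n j * fact j ^ 4 = int ((n + j) choose (2*j)) * (fact j * fact j * int ((2*j) choose j))^2"
    by (simp add: square_coeff_def power2_eq_square power4_eq_xxxx ac_simps)
  also have "\<dots> = int (fact (2*j) * ((n + j) choose (2*j))) * fact (2*j)"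
    by (simp add: fact_mult_central_binomial power2_eq_square)
  finally show ?thesis by (simp only: of_nat_fact_mult_choose)
qed

lemma square_coeff_Suc_falling_fact:
  "square_coeff n (Suc i) * fact (Suc i) ^ 4
    = falling_fact (int n + int i + 1) (2*i + 2) * ((2 * int i + 1) * (2 * int i + 2) * fact (2*i))"
  using square_coeff_falling_fact[of n "Suc i"] by (simp add: algebra_simps)

lemma square_coeff_falling_fact_Suc:
  "square_coeff n i * fact (Suc i) ^ 4 = (int i + 1)^4 * falling_fact (int n + int i) (2*i) * fact (2*i)"
proof -
  have "square_coeff n i * fact (Suc i) ^ 4 = (square_coeff n i * fact i ^ 4) * (int i + 1)^4"
    by (simp add: power4_eq_xxxx algebra_simps)
  then show ?thesis
    unfolding square_coeff_falling_fact by (simp add: algebra_simps)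
qed

lemma trinomial_coeff_recurrence:
  "int (m+2) * trinomial_coeff (m+2) k
    = int (2*m+3) * trinomial_coeff (m+1) k - int (m+1) * trinomial_coeff m k
      + 4 * int (m+1) * shift (trinomial_coeff m) k"
proof (cases k)
  case 0
  then show ?thesis by (simp add: trinomial_coeff_def shift_def)
next
  case (Suc i)
  define f :: int where "f = fact k ^ 2"
  have "f \<noteq> 0" unfolding f_def by simp
  have coeff: "trinomial_coeff n k * f = falling_fact (int n) (2*i + 2)" for n
    using trinomial_coeff_falling_fact[of n k] unfolding f_def Suc by simp
  have "shift (trinomial_coeff m) k * f = (trinomial_coeff m i * fact i ^ 2) * (int i + 1)^2"
    unfolding f_def Suc shift_def by (simp add: power2_eq_square algebra_simps)
  then have shifted: "shift (trinomial_coeff m) k * f = (int i + 1)^2 * falling_fact (int m) (2*i)"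
    by (simp only: trinomial_coeff_falling_fact mult.commute)
  have "int (m+2) * trinomial_coeff (m+2) k * f
     = (int (2*m+3) * trinomial_coeff (m+1) k - int (m+1) * trinomial_coeff m k
        + 4 * int (m+1) * shift (trinomial_coeff m) k) * f"
    using falling_fact_trinomial_recurrence[of "int m" i]
    by (simp only: ring_distribs mult.assoc coeff shifted) (simp add: algebra_simps)
  with \<open>f \<noteq> 0\<close> show ?thesis by simp
qed

lemma product_coeff_Suc: "product_coeff (Suc n) j = int (Suc n + j) * square_coeff n j"
proof -
  have "(Suc n + j - 2*j) * ((Suc n + j) choose (2*j)) = (Suc n + j) * ((n + j) choose (2*j))"
    using binomial_absorb_comp[of "Suc n + j" "2*j"] by simp
  moreover have "Suc n + j - 2*j = Suc n - j" by arith
  ultimately have "int (Suc n - j) * int ((Suc n + j) choose (2*j)) = int (Suc n + j) * int ((n + j) choose (2*j))"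
    by (metis of_nat_mult)
  then show ?thesis
    unfolding product_coeff_def square_coeff_def by (metis add_Suc mult.assoc)
qed

lemma square_coeff_recurrence:
  "int (m+2)^2 * square_coeff (m+2) j
    = int (2*m+3)^2 * (square_coeff (m+1) j + 4 * shift (square_coeff (m+1)) j)
      - 2 * int (2*m+3) * (product_coeff (m+1) j + 4 * shift (product_coeff (m+1)) j)
      + int (m+1)^2 * square_coeff m j"
proof (cases j)
  case 0
  then show ?thesis
    by (simp add: square_coeff_def product_coeff_def shift_def power2_eq_square algebra_simps)
next
  case (Suc i)
  define f :: int where "f = fact j ^ 4"
  define g :: int where "g = fact (2*i)"
  have "f \<noteq> 0" unfolding f_def by simp
  have coeff: "square_coeff n j * f
      = falling_fact (int n + int i + 1) (2*i + 2) * ((2 * int i + 1) * (2 * int i + 2) * g)" for n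
    unfolding f_def g_def Suc by (rule square_coeff_Suc_falling_fact)
  have shifted: "square_coeff n i * f = (int i + 1)^4 * falling_fact (int n + int i) (2*i) * g" for n
    unfolding f_def g_def Suc by (rule square_coeff_falling_fact_Suc)
  have shift: "shift h j = h i" for h :: "nat \<Rightarrow> int"
    by (simp add: Suc shift_def)
  define x where "x = int m + 1"
  define y where "y = x + int i"
  define k where "k = (2 * int i + 1) * (2 * int i + 2)"
  define p where "p = (int i + 1)^4"
  have lhs: "int (m+2)^2 * square_coeff (m+2) j * f = (x + 1)^2 * k * falling_fact (y + 2) (2*i + 2) * g"
    unfolding x_def y_def k_def by (simp only: mult.assoc coeff) (simp add: algebra_simps)
  have rhs: "(int (2*m+3)^2 * (square_coeff (m+1) j + 4 * shift (square_coeff (m+1)) j)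
        - 2 * int (2*m+3) * (product_coeff (m+1) j + 4 * shift (product_coeff (m+1)) j)
        + int (m+1)^2 * square_coeff m j) * f
     = ((2*x + 1)^2 * (k * falling_fact (y + 1) (2*i + 2) + 4 * p * falling_fact y (2*i))
      - 2 * (2*x + 1) * ((x - 1 - int i) * k * falling_fact (y + 1) (2*i + 2)
                         + 4 * (x - int i) * p * falling_fact y (2*i))
      + x^2 * k * falling_fact y (2*i + 2)) * g"
    unfolding shift product_coeff_eq x_def y_def k_def p_def
    by (simp only: ring_distribs mult.assoc coeff shifted) (simp add: Suc algebra_simps)
  have "int (m+2)^2 * square_coeff (m+2) j * f
     = (int (2*m+3)^2 * (square_coeff (m+1) j + 4 * shift (square_coeff (m+1)) j)
        - 2 * int (2*m+3) * (product_coeff (m+1) j + 4 * shift (product_coeff (m+1)) j)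
        + int (m+1)^2 * square_coeff m j) * f"
    unfolding lhs rhs using falling_fact_square_recurrence[of x i]
    unfolding y_def k_def p_def by simp
  with \<open>f \<noteq> 0\<close> show ?thesis by simp
qed

definition binary_form :: "'a::comm_ring_1 \<Rightarrow> 'a \<Rightarrow> nat \<Rightarrow> (nat \<Rightarrow> 'a) \<Rightarrow> 'a" where
  "binary_form x y N f = (\<Sum>j\<le>N. f j * x^j * y^(N - j))"

definition weighted_form :: "'a::comm_ring_1 \<Rightarrow> 'a \<Rightarrow> nat \<Rightarrow> (nat \<Rightarrow> 'a) \<Rightarrow> 'a" where
  "weighted_form b c N f = (\<Sum>k\<le>N. f k * b^(N - 2*k) * c^k)"

lemma binary_form_mult_right:
  "f (Suc N) = 0 \<Longrightarrow> y * binary_form x y N f = binary_form x y (Suc N) f"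
  unfolding binary_form_def
  by (auto simp add: sum_distrib_left Suc_diff_le algebra_simps intro!: sum.cong)

lemma binary_form_mult_left: "x * binary_form x y N f = binary_form x y (Suc N) (shift f)"
  unfolding binary_form_def sum.atMost_Suc_shift
  by (simp add: shift_def sum_distrib_left algebra_simps)

lemma binary_form_scale: "a * binary_form x y N f = binary_form x y N (\<lambda>j. a * f j)"
  unfolding binary_form_def by (simp add: sum_distrib_left algebra_simps)

lemma binary_form_add: "binary_form x y N f + binary_form x y N g = binary_form x y N (\<lambda>j. f j + g j)"
  unfolding binary_form_def by (simp add: sum.distrib algebra_simps)

lemma binary_form_diff: "binary_form x y N f - binary_form x y N g = binary_form x y N (\<lambda>j. f j - g j)"
  unfolding binary_form_def by (simp add: sum_subtractf algebra_simps)

lemma weighted_form_mult_first: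
  assumes "\<And>k. N < 2*k \<Longrightarrow> f k = 0"
  shows "b * weighted_form b c N f = weighted_form b c (Suc N) f"
proof -
  have "b * weighted_form b c N f = (\<Sum>k\<le>N. f k * b^(Suc N - 2*k) * c^k)"
    unfolding weighted_form_def sum_distrib_left
  proof (intro sum.cong refl)
    fix k
    show "b * (f k * b ^ (N - 2*k) * c ^ k) = f k * b ^ (Suc N - 2*k) * c ^ k"
      using assms[of k] by (cases "2*k \<le> N") (simp_all add: Suc_diff_le)
  qed
  also have "\<dots> = weighted_form b c (Suc N) f"
    unfolding weighted_form_def using assms[of "Suc N"] by simp
  finally show ?thesis .
qed

lemma weighted_form_mult_second:
  assumes "\<And>k. N < 2*k \<Longrightarrow> f k = 0"
  shows "c * weighted_form b c N f = weighted_form b c (Suc (Suc N)) (shift f)"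
proof -
  have "weighted_form b c (Suc (Suc N)) (shift f) = (\<Sum>k\<le>Suc N. f k * b^(N - 2*k) * c^(Suc k))"
    unfolding weighted_form_def sum.atMost_Suc_shift by (simp add: shift_def)
  also have "\<dots> = (\<Sum>k\<le>N. f k * b^(N - 2*k) * c^(Suc k))"
    using assms[of "Suc N"] by simp
  also have "\<dots> = c * weighted_form b c N f"
    unfolding weighted_form_def sum_distrib_left by (simp add: algebra_simps)
  finally show ?thesis by simp
qed

lemma T_eq_weighted_form: "T n b c = weighted_form b c n (trinomial_coeff n)"
  unfolding T_def weighted_form_def
proof (rule sum.mono_neutral_cong_left)
  show "\<forall>k\<in>{..n} - {..n div 2}. trinomial_coeff n k * b^(n - 2*k) * c^k = 0"
    using trinomial_coeff_eq_0[of n] by auto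
qed (auto simp add: trinomial_coeff_def)

lemma T_recurrence:
  "int (n+2) * T (n+2) b c = int (2*n+3) * b * T (n+1) b c - int (n+1) * (b^2 - 4*c) * T n b c"
proof -
  let ?W = "weighted_form b c"
  have b1: "b * ?W (n+1) (trinomial_coeff (n+1)) = ?W (n+2) (trinomial_coeff (n+1))"
    using weighted_form_mult_first[of "n+1" "trinomial_coeff (n+1)"] trinomial_coeff_eq_0 by simp
  have b2: "b * ?W n (trinomial_coeff n) = ?W (n+1) (trinomial_coeff n)"
    using weighted_form_mult_first[of n "trinomial_coeff n"] trinomial_coeff_eq_0 by simp
  have b3: "b * ?W (n+1) (trinomial_coeff n) = ?W (n+2) (trinomial_coeff n)"
    using weighted_form_mult_first[of "n+1" "trinomial_coeff n"] trinomial_coeff_eq_0 by simp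
  have c1: "c * ?W n (trinomial_coeff n) = ?W (n+2) (shift (trinomial_coeff n))"
    using weighted_form_mult_second[of n "trinomial_coeff n"] trinomial_coeff_eq_0 by simp
  have "int (2*n+3) * b * T (n+1) b c - int (n+1) * (b^2 - 4*c) * T n b c
     = int (2*n+3) * (b * ?W (n+1) (trinomial_coeff (n+1))) - int (n+1) * (b * (b * ?W n (trinomial_coeff n)))
       + 4 * int (n+1) * (c * ?W n (trinomial_coeff n))"
    unfolding T_eq_weighted_form by (simp add: power2_eq_square algebra_simps)
  also have "\<dots> = int (2*n+3) * ?W (n+2) (trinomial_coeff (n+1)) - int (n+1) * ?W (n+2) (trinomial_coeff n)
       + 4 * int (n+1) * ?W (n+2) (shift (trinomial_coeff n))"
    unfolding b1 b2 b3 c1 ..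
  also have "\<dots> = ?W (n+2) (\<lambda>k. int (2*n+3) * trinomial_coeff (n+1) k - int (n+1) * trinomial_coeff n k
       + 4 * int (n+1) * shift (trinomial_coeff n) k)"
    unfolding weighted_form_def
    by (simp add: sum_distrib_left sum.distrib sum_subtractf algebra_simps)
  also have "\<dots> = int (n+2) * T (n+2) b c"
    unfolding T_eq_weighted_form weighted_form_def trinomial_coeff_recurrence[symmetric]
    by (simp add: sum_distrib_left algebra_simps)
  finally show ?thesis ..
qed

lemma binary_form_product_coeff_recurrence:
  "binary_form c d (n+1) (product_coeff (n+2))
    = int (2*n+3) * binary_form c d (n+1) (square_coeff (n+1)) - d * binary_form c d n (product_coeff (n+1))"
proof -
  have "d * binary_form c d n (product_coeff (n+1)) = binary_form c d (n+1) (product_coeff (n+1))"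
    using binary_form_mult_right[of "product_coeff (n+1)" n] by (simp add: product_coeff_def)
  moreover have "int (2*n+3) * square_coeff (n+1) j - product_coeff (n+1) j = product_coeff (n+2) j" for j
    using product_coeff_Suc[of "n+1" j] product_coeff_eq[of "n+1" j] by (simp add: algebra_simps)
  ultimately show ?thesis
    by (simp add: binary_form_scale binary_form_diff)
qed

lemma binary_form_square_coeff_recurrence:
  "int (n+2)^2 * binary_form c d (n+2) (square_coeff (n+2))
    = int (2*n+3)^2 * (d + 4*c) * binary_form c d (n+1) (square_coeff (n+1))
      - 2 * int (2*n+3) * (d + 4*c) * (d * binary_form c d n (product_coeff (n+1)))
      + int (n+1)^2 * d^2 * binary_form c d n (square_coeff n)"
proof -
  let ?F = "binary_form c d"
  let ?A = "square_coeff" and ?B = "product_coeff (n+1)"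
  have d_A1: "d * ?F (n+1) (?A (n+1)) = ?F (n+2) (?A (n+1))"
    using binary_form_mult_right[of "?A (n+1)" "n+1"] square_coeff_eq_0[of "n+1" "n+2"] by simp
  have c_A1: "c * ?F (n+1) (?A (n+1)) = ?F (n+2) (shift (?A (n+1)))"
    using binary_form_mult_left[of c d "n+1"] by simp
  have d_B0: "d * ?F n ?B = ?F (n+1) ?B"
    using binary_form_mult_right[of ?B n] by (simp add: product_coeff_def)
  have d_B1: "d * ?F (n+1) ?B = ?F (n+2) ?B"
    using binary_form_mult_right[of ?B "n+1"] by (simp add: product_coeff_def)
  have c_B1: "c * ?F (n+1) ?B = ?F (n+2) (shift ?B)"
    using binary_form_mult_left[of c d "n+1"] by simp
  have d_A0: "d * ?F n (?A n) = ?F (n+1) (?A n)"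
    using binary_form_mult_right[of "?A n" n] square_coeff_eq_0[of n "n+1"] by simp
  have d_A0_Suc: "d * ?F (n+1) (?A n) = ?F (n+2) (?A n)"
    using binary_form_mult_right[of "?A n" "n+1"] square_coeff_eq_0[of n "n+2"] by simp
  have "int (2*n+3)^2 * (d + 4*c) * ?F (n+1) (?A (n+1))
      - 2 * int (2*n+3) * (d + 4*c) * (d * ?F n ?B) + int (n+1)^2 * d^2 * ?F n (?A n)
    = int (2*n+3)^2 * (d * ?F (n+1) (?A (n+1))) + 4 * int (2*n+3)^2 * (c * ?F (n+1) (?A (n+1)))
      - 2 * int (2*n+3) * (d * (d * ?F n ?B)) - 8 * int (2*n+3) * (c * (d * ?F n ?B))
      + int (n+1)^2 * (d * (d * ?F n (?A n)))"
    by (simp add: power2_eq_square algebra_simps)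
  also have "\<dots> = int (2*n+3)^2 * ?F (n+2) (?A (n+1)) + 4 * int (2*n+3)^2 * ?F (n+2) (shift (?A (n+1)))
      - 2 * int (2*n+3) * ?F (n+2) ?B - 8 * int (2*n+3) * ?F (n+2) (shift ?B)
      + int (n+1)^2 * ?F (n+2) (?A n)"
    unfolding d_A1 c_A1 d_B0 d_B1 c_B1 d_A0 d_A0_Suc ..
  also have "\<dots> = ?F (n+2) (\<lambda>j. int (n+2)^2 * ?A (n+2) j)"
    unfolding square_coeff_recurrence[of n]
    by (simp only: binary_form_scale binary_form_add binary_form_diff) (simp add: algebra_simps)
  also have "\<dots> = int (n+2)^2 * ?F (n+2) (?A (n+2))"
    by (simp only: binary_form_scale)
  finally show ?thesis by simp
qed

lemma T_product_step:
  fixes b c :: int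
  defines "d \<equiv> b^2 - 4*c"
  assumes square: "T (n+1) b c ^ 2 = binary_form c d (n+1) (square_coeff (n+1))"
    and product: "int (n+1) * T (n+1) b c * T n b c = b * binary_form c d n (product_coeff (n+1))"
  shows "int (n+2) * T (n+2) b c * T (n+1) b c = b * binary_form c d (n+1) (product_coeff (n+2))"
proof -
  have "int (n+2) * T (n+2) b c * T (n+1) b c
      = int (2*n+3) * b * T (n+1) b c ^ 2 - d * (int (n+1) * T (n+1) b c * T n b c)"
    unfolding T_recurrence d_def by (simp add: power2_eq_square algebra_simps)
  also have "\<dots> = b * (int (2*n+3) * binary_form c d (n+1) (square_coeff (n+1))
      - d * binary_form c d n (product_coeff (n+1)))"
    unfolding square product by (simp add: algebra_simps)
  finally show ?thesis
    by (simp only: binary_form_product_coeff_recurrence)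
qed

lemma T_square_step:
  fixes b c :: int
  defines "d \<equiv> b^2 - 4*c"
  assumes square0: "T n b c ^ 2 = binary_form c d n (square_coeff n)"
    and square1: "T (n+1) b c ^ 2 = binary_form c d (n+1) (square_coeff (n+1))"
    and product: "int (n+1) * T (n+1) b c * T n b c = b * binary_form c d n (product_coeff (n+1))"
  shows "T (n+2) b c ^ 2 = binary_form c d (n+2) (square_coeff (n+2))"
proof -
  have "int (n+2)^2 * T (n+2) b c ^ 2 = (int (2*n+3) * b * T (n+1) b c - int (n+1) * d * T n b c)^2"
    unfolding d_def T_recurrence[symmetric] by (simp add: power_mult_distrib)
  also have "\<dots> = int (2*n+3)^2 * b^2 * T (n+1) b c ^ 2
      - 2 * int (2*n+3) * b * d * (int (n+1) * T (n+1) b c * T n b c)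
      + int (n+1)^2 * d^2 * T n b c ^ 2"
    by (simp add: power2_eq_square algebra_simps)
  also have "\<dots> = int (n+2)^2 * binary_form c d (n+2) (square_coeff (n+2))"
    unfolding square0 square1 product binary_form_square_coeff_recurrence
    by (simp add: d_def power2_eq_square algebra_simps)
  finally show ?thesis by simp
qed

lemma T_square_and_product:
  fixes b c :: int
  defines "d \<equiv> b^2 - 4*c"
  shows "T n b c ^ 2 = binary_form c d n (square_coeff n)
    \<and> T (n+1) b c ^ 2 = binary_form c d (n+1) (square_coeff (n+1))
    \<and> int (n+1) * T (n+1) b c * T n b c = b * binary_form c d n (product_coeff (n+1))"
proof (induction n)
  case 0
  have "T 0 b c = 1" "T 1 b c = b" by (simp_all add: T_def)
  then show ?case
    by (simp add: d_def binary_form_def square_coeff_def product_coeff_def power2_eq_square numeral_2_eq_2)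
next
  case (Suc n)
  then show ?case
    using T_product_step[of n b c] T_square_step[of n b c] unfolding d_def by simp
qed

theorem lemma4p1:
  fixes b c :: int and n :: nat
  assumes "n \<ge> 1"
  shows "int n * T n b c * T (n - 1) b c =
    b * (\<Sum>j\<le>n - 1. int (n - j) * int ((n + j) choose (2*j)) * int ((2*j) choose j)^2
         * c^j * (b^2 - 4*c)^(n - 1 - j))"
proof -
  obtain m where n: "n = m + 1" using assms by (metis add.commute le_Suc_ex)
  have "int (m+1) * T (m+1) b c * T m b c = b * binary_form c (b^2 - 4*c) m (product_coeff (m+1))"
    using T_square_and_product[of m b c] by blast
  then show ?thesis
    unfolding n binary_form_def product_coeff_def square_coeff_def by (simp add: mult.assoc)
qed

end
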